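(* Let $m\ge 3$ and $H=\Theta(l_1,\ldots,l_m)$ with $l_1\ge 2$ and $l_2\ge 4$, and let $G=H^2$. Then $G$ is equitably $k$-choosable for every $k$ with $m+3\le k\le 2m+1$.
   Context: All graphs are finite and simple. $\Theta(l_1,\ldots,l_m)$, with $l_1\le\cdots\le l_m$, denotes the graph consisting of two vertices $u,w$ joined by $m$ internally disjoint paths of lengths $l_1,\ldots,l_m$; the $i$th path is $u, v_{i,1},\ldots,v_{i,l_i-1}, w$. For a graph $H$, $H^2$ has vertex set $V(H)$ with two vertices adjacent iff their distance in $H$ is 1 or 2. A $k$-assignment $L$ assigns to each vertex a set of exactly $k$ colors; an equitable $L$-coloring of $G$ is a proper coloring $f$ with $f(v)\in L(v)$ such that no color is used more than $\lceil |V(G)|/k\rceil$ times; $G$ is equitably $k$-choosable if it has an equitable $L$-coloring for every $k$-assignment $L$. *)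

theory Defs
  imports Complex_Main
begin

text \<open>Generic graph notions: a graph is a finite vertex set V with a symmetric
irreflexive adjacency relation adj.\<close>

definition k_assignment :: "'a set \<Rightarrow> nat \<Rightarrow> ('a \<Rightarrow> nat set) \<Rightarrow> bool" where
  "k_assignment V k L \<longleftrightarrow> (\<forall>v\<in>V. finite (L v) \<and> card (L v) = k)"

definition equitable_L_coloring ::
  "'a set \<Rightarrow> ('a \<Rightarrow> 'a \<Rightarrow> bool) \<Rightarrow> nat \<Rightarrow> ('a \<Rightarrow> nat set) \<Rightarrow> ('a \<Rightarrow> nat) \<Rightarrow> bool" where
  "equitable_L_coloring V adj k L f \<longleftrightarrow>
     (\<forall>v\<in>V. f v \<in> L v) \<and>
     (\<forall>x\<in>V. \<forall>y\<in>V. adj x y \<longrightarrow> f x \<noteq> f y) \<and>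
     (\<forall>c. real (card {v\<in>V. f v = c}) \<le> of_int \<lceil>real (card V) / real k\<rceil>)"

definition equitably_choosable :: "'a set \<Rightarrow> ('a \<Rightarrow> 'a \<Rightarrow> bool) \<Rightarrow> nat \<Rightarrow> bool" where
  "equitably_choosable V adj k \<longleftrightarrow>
     (\<forall>L. k_assignment V k L \<longrightarrow> (\<exists>f. equitable_L_coloring V adj k L f))"

definition graph_square :: "'a set \<Rightarrow> ('a \<Rightarrow> 'a \<Rightarrow> bool) \<Rightarrow> 'a \<Rightarrow> 'a \<Rightarrow> bool" where
  "graph_square V adj x y \<longleftrightarrow> x \<in> V \<and> y \<in> V \<and> x \<noteq> y \<and>
     (adj x y \<or> (\<exists>z\<in>V. adj x z \<and> adj z y))"

text \<open>Theta graph Theta(l_1,...,l_m), lengths given as a list l (path i is indexed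
by i < length l, 0-based). Vertices: TU = u, TW = w, TV i j = v_{i,j} for 1 \<le> j < l!i.\<close>
datatype theta_vertex = TU | TW | TV nat nat

definition theta_pos :: "nat list \<Rightarrow> nat \<Rightarrow> nat \<Rightarrow> theta_vertex" where
  "theta_pos l i j = (if j = 0 then TU else if j = l ! i then TW else TV i j)"

definition theta_verts :: "nat list \<Rightarrow> theta_vertex set" where
  "theta_verts l = {TU, TW} \<union> {TV i j | i j. i < length l \<and> 1 \<le> j \<and> j < l ! i}"

definition theta_adj :: "nat list \<Rightarrow> theta_vertex \<Rightarrow> theta_vertex \<Rightarrow> bool" where
  "theta_adj l x y \<longleftrightarrow> (\<exists>i < length l. \<exists>j < l ! i.
      (x = theta_pos l i j \<and> y = theta_pos l i (Suc j)) \<or>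
      (y = theta_pos l i j \<and> x = theta_pos l i (Suc j)))"

end

theory Submission
  imports Defs
begin

definition rank :: "('a \<Rightarrow> 'b::linorder) \<Rightarrow> 'a set \<Rightarrow> 'a \<Rightarrow> nat" where
  "rank p R x = card {y \<in> R. p y < p x}"

lemma rank_less_card:
  assumes "finite R" "x \<in> R"
  shows "rank p R x < card R"
  unfolding rank_def using assms by (intro psubset_card_mono) auto

lemma rank_strict_mono:
  assumes "finite R" "x \<in> R" "p x < p y"
  shows "rank p R x < rank p R y"
  unfolding rank_def using assms by (intro psubset_card_mono) auto

lemma rank_mono:
  assumes "finite R" "p x \<le> p y"
  shows "rank p R x \<le> rank p R y"
  unfolding rank_def using assms by (intro card_mono) auto

lemma inj_on_rank:
  assumes "finite R" "inj_on p R"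
  shows "inj_on (rank p R) R"
proof (rule inj_onI)
  fix x y assume xy: "x \<in> R" "y \<in> R" "rank p R x = rank p R y"
  have "p x = p y"
    using rank_strict_mono[OF assms(1) xy(1), of p y] rank_strict_mono[OF assms(1) xy(2), of p x] xy(3)
    by (metis less_irrefl linorder_neqE)
  then show "x = y"
    using inj_onD[OF assms(2) _ xy(1,2)] by simp
qed

lemma rank_increase_le:
  fixes p :: "'a \<Rightarrow> int"
  assumes "finite R" "inj_on p R" "p x \<le> p y"
  shows "rank p R y \<le> rank p R x + nat (p y - p x)"
proof -
  let ?B = "{z \<in> R. p x \<le> p z \<and> p z < p y}"
  have "rank p R y \<le> card ({z \<in> R. p z < p x} \<union> ?B)"
    unfolding rank_def using assms(1) by (intro card_mono) auto
  also have "\<dots> \<le> rank p R x + card ?B"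
    unfolding rank_def by (rule card_Un_le)
  finally have "rank p R y \<le> rank p R x + card ?B" .
  moreover have "card ?B = card (p ` ?B)"
    using assms(2) by (intro card_image[symmetric]) (auto intro: inj_on_subset)
  moreover have "card (p ` ?B) \<le> card {p x..<p y}"
    by (intro card_mono) auto
  ultimately show ?thesis by simp
qed

lemma rank_dist_le:
  fixes p :: "'a \<Rightarrow> int"
  assumes "finite R" "inj_on p R"
  shows "\<bar>int (rank p R x) - int (rank p R y)\<bar> \<le> \<bar>p x - p y\<bar>"
proof -
  have "\<bar>int (rank p R b) - int (rank p R a)\<bar> \<le> p b - p a" if "p a \<le> p b" for a b
    using rank_increase_le[OF assms that] rank_mono[OF assms(1) that] that by simp
  from this[of x y] this[of y x] show ?thesis
    by (cases "p x \<le> p y") (simp_all add: abs_minus_commute)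
qed

lemma k_assignment_subset: "k_assignment V k L \<Longrightarrow> W \<subseteq> V \<Longrightarrow> k_assignment W k L"
  unfolding k_assignment_def by blast

lemma k_assignment_avoid:
  assumes "k_assignment V k L" "x \<in> V" "finite A" "card A < k"
  obtains c where "c \<in> L x" "c \<notin> A"
proof -
  have "\<not> L x \<subseteq> A"
  proof
    assume "L x \<subseteq> A"
    then have "card (L x) < k"
      using card_mono[OF assms(3)] assms(4) by (meson le_less_trans)
    then show False
      using assms(1,2) unfolding k_assignment_def by simp
  qed
  then show ?thesis using that by blast
qed

lemma greedy_colouring_by_rank:
  fixes r :: "'a \<Rightarrow> nat"
  assumes "finite R" "inj_on r R" "k_assignment R k L" "0 < k"
  shows "\<exists>g. (\<forall>x\<in>R. g x \<in> L x) \<and>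
    (\<forall>x\<in>R. \<forall>y\<in>R. x \<noteq> y \<longrightarrow> \<bar>int (r x) - int (r y)\<bar> < int k \<longrightarrow> g x \<noteq> g y)"
  using assms(1-3)
proof (induction R rule: finite_ranking_induct[where f = r])
  case empty
  then show ?case by simp
next
  case (insert x S)
  show ?case
  proof (cases "x \<in> S")
    case True
    then show ?thesis using insert by (simp add: insert_absorb)
  next
    case False
    obtain g where g_in: "\<forall>y\<in>S. g y \<in> L y"
      and g_window: "\<forall>y\<in>S. \<forall>z\<in>S. y \<noteq> z \<longrightarrow> \<bar>int (r y) - int (r z)\<bar> < int k \<longrightarrow> g y \<noteq> g z"
      using insert by (auto intro: k_assignment_subset)
    define Y where "Y = {y \<in> S. r x < r y + k}"
    have r_below: "r y < r x" if "y \<in> S" for y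
      using insert.hyps(2)[OF that] inj_onD[OF insert.prems(1), of y x] that False
      by fastforce
    have "inj_on r Y"
      using insert.prems(1) unfolding Y_def by (auto intro: inj_on_subset)
    moreover have "r ` Y \<subseteq> {r x + 1 - k..<r x}"
      using r_below unfolding Y_def by auto
    ultimately have "card Y \<le> card {r x + 1 - k..<r x}"
      by (rule card_inj_on_le) simp
    then have "card Y < k"
      using assms(4) by simp
    moreover have fin_Y: "finite Y"
      using insert.hyps(1) unfolding Y_def by simp
    ultimately have "card (g ` Y) < k"
      using card_image_le[OF fin_Y, of g] by linarith
    then obtain c where c: "c \<in> L x" "c \<notin> g ` Y"
      using k_assignment_avoid[OF insert.prems(2) insertI1 finite_imageI[OF fin_Y]] by blast
    have near_in_Y: "y \<in> Y" if "y \<in> S" "\<bar>int (r x) - int (r y)\<bar> < int k" for y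
      using that r_below[OF that(1)] unfolding Y_def by auto
    let ?g = "g(x := c)"
    have "\<forall>y\<in>insert x S. ?g y \<in> L y"
      using g_in c(1) by simp
    moreover have "?g y \<noteq> ?g z"
      if "y \<in> insert x S" "z \<in> insert x S" "y \<noteq> z" "\<bar>int (r y) - int (r z)\<bar> < int k" for y z
      using that g_window c(2) near_in_Y[of y] near_in_Y[of z] False
      by (auto simp: abs_minus_commute)
    ultimately show ?thesis by blast
  qed
qed

lemma div_eq_imp_less_add:
  fixes a b k :: nat
  assumes "a div k = b div k" "0 < k"
  shows "a < b + k"
proof -
  have "a = b div k * k + a mod k"
    using div_mult_mod_eq[of a k] assms(1) by simp
  moreover have "b div k * k \<le> b" "a mod k < k"
    using assms(2) by (simp_all add: div_times_less_eq_dividend)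
  ultimately show ?thesis by linarith
qed

lemma colour_class_card_le:
  fixes r :: "'a \<Rightarrow> nat"
  assumes "0 < k" "\<And>x. x \<in> R \<Longrightarrow> r x < N"
    and "\<And>x y. x \<in> R \<Longrightarrow> y \<in> R \<Longrightarrow> x \<noteq> y \<Longrightarrow> g x = g y \<Longrightarrow> int k \<le> \<bar>int (r x) - int (r y)\<bar>"
  shows "real (card {x \<in> R. g x = c}) \<le> of_int \<lceil>real N / real k\<rceil>"
proof -
  let ?C = "{x \<in> R. g x = c}"
  let ?n = "\<lceil>real N / real k\<rceil>"
  have inj: "inj_on (\<lambda>x. r x div k) ?C"
  proof (rule inj_onI)
    fix x y assume "x \<in> ?C" "y \<in> ?C" "r x div k = r y div k"
    moreover have "\<bar>int (r x) - int (r y)\<bar> < int k"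
      using div_eq_imp_less_add[OF \<open>r x div k = r y div k\<close> assms(1)]
        div_eq_imp_less_add[OF \<open>r x div k = r y div k\<close>[symmetric] assms(1)]
      by linarith
    ultimately show "x = y" using assms(3) by fastforce
  qed
  have "r x div k < nat ?n" if "x \<in> R" for x
  proof -
    have "real (r x div k) \<le> real (r x) / real k"
      by (rule of_nat_div_le_of_nat)
    also have "\<dots> < real N / real k"
      using assms(1) assms(2)[OF that] by (simp add: divide_strict_right_mono)
    finally show ?thesis by (simp add: zless_nat_eq_int_zless less_ceiling_iff)
  qed
  then have "(\<lambda>x. r x div k) ` ?C \<subseteq> {..<nat ?n}"
    by auto
  with inj have "card ?C \<le> nat ?n"
    using card_inj_on_le[of _ ?C "{..<nat ?n}"] by simp
  moreover have "0 \<le> ?n"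
    using ceiling_mono[of 0 "real N / real k"] by simp
  ultimately have "int (card ?C) \<le> ?n"
    by (metis nat_0_le of_nat_le_iff)
  then show ?thesis
    by (metis of_int_le_iff of_int_of_nat_eq)
qed

lemma greedy_extension_along_list:
  assumes "distinct xs" "k_assignment (set xs) k L" "finite R"
    and "\<And>j. j < length xs \<Longrightarrow> card {y \<in> R. adj (xs ! j) y} + j < k"
  shows "\<exists>f. (\<forall>x\<in>set xs. f x \<in> L x \<and> (\<forall>y\<in>R. adj x y \<longrightarrow> f x \<noteq> g y)) \<and> inj_on f (set xs)"
  using assms(1,2,4)
proof (induction xs rule: rev_induct)
  case Nil
  then show ?case by simp
next
  case (snoc x xs)
  have "card {y \<in> R. adj (xs ! j) y} + j < k" if "j < length xs" for j
    using snoc.prems(3)[of j] that by (simp add: nth_append)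
  then obtain f where f_ok: "\<forall>z\<in>set xs. f z \<in> L z \<and> (\<forall>y\<in>R. adj z y \<longrightarrow> f z \<noteq> g y)"
    and f_inj: "inj_on f (set xs)"
    using snoc.IH snoc.prems(1,2) k_assignment_subset by fastforce
  let ?A = "g ` {y \<in> R. adj x y} \<union> f ` set xs"
  have "card ?A \<le> card {y \<in> R. adj x y} + length xs"
    using card_Un_le[of "g ` {y \<in> R. adj x y}" "f ` set xs"] assms(3)
      card_image_le[of "{y \<in> R. adj x y}" g] card_image_le[of "set xs" f] card_length[of xs]
    by simp
  also have "\<dots> < k"
    using snoc.prems(3)[of "length xs"] by simp
  finally obtain c where c: "c \<in> L x" "c \<notin> ?A"
    using k_assignment_avoid[OF snoc.prems(2), of x ?A] assms(3) by auto
  have x_new: "x \<notin> set xs"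
    using snoc.prems(1) by simp
  let ?f = "f(x := c)"
  have "\<forall>z\<in>set (xs @ [x]). ?f z \<in> L z \<and> (\<forall>y\<in>R. adj z y \<longrightarrow> ?f z \<noteq> g y)"
    using f_ok c x_new by auto
  moreover have "inj_on ?f (set (xs @ [x]))"
    using f_inj c(2) x_new by (auto simp: inj_on_def)
  ultimately show ?case by blast
qed

theorem equitably_choosable_by_layout:
  fixes V :: "'a set" and pos :: "'a \<Rightarrow> int"
  assumes "finite V" "0 < k"
    and sym: "\<And>x y. adj x y \<Longrightarrow> adj y x" and irrefl: "\<And>x. \<not> adj x x"
    and "distinct xs" "set xs \<subseteq> V" "length xs = k"
    and degree: "\<And>j. j < k \<Longrightarrow> card {y \<in> V - set xs. adj (xs ! j) y} + j < k"
    and "inj_on pos (V - set xs)"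
    and band: "\<And>x y. x \<in> V - set xs \<Longrightarrow> y \<in> V - set xs \<Longrightarrow> adj x y \<Longrightarrow> \<bar>pos x - pos y\<bar> < int k"
  shows "equitably_choosable V adj k"
  unfolding equitably_choosable_def
proof (intro allI impI)
  fix L assume L: "k_assignment V k L"
  define R where "R = V - set xs"
  define r where "r = rank pos R"
  have fin_R: "finite R" and inj_r: "inj_on r R"
    using assms(1,9) inj_on_rank unfolding R_def r_def by auto
  obtain g where g_in: "\<forall>x\<in>R. g x \<in> L x"
    and g_window: "\<forall>x\<in>R. \<forall>y\<in>R. x \<noteq> y \<longrightarrow> \<bar>int (r x) - int (r y)\<bar> < int k \<longrightarrow> g x \<noteq> g y"
    using greedy_colouring_by_rank[OF fin_R inj_r _ assms(2)] L k_assignment_subset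
    unfolding R_def by blast
  have r_dist: "\<bar>int (r x) - int (r y)\<bar> \<le> \<bar>pos x - pos y\<bar>" for x y
    using rank_dist_le[OF fin_R assms(9)[folded R_def]] unfolding r_def .
  obtain f where f_ok: "\<forall>x\<in>set xs. f x \<in> L x \<and> (\<forall>y\<in>R. adj x y \<longrightarrow> f x \<noteq> g y)"
    and f_inj: "inj_on f (set xs)"
    using greedy_extension_along_list[OF assms(5) _ fin_R, of k L adj g] L assms(6,7) degree
      k_assignment_subset unfolding R_def by blast
  define h where "h v = (if v \<in> set xs then f v else g v)" for v
  have V_split: "v \<in> V \<longleftrightarrow> v \<in> R \<or> v \<in> set xs" and R_xs: "v \<in> R \<Longrightarrow> v \<notin> set xs" for v
    using assms(6) unfolding R_def by auto
  have "\<forall>v\<in>V. h v \<in> L v"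
    using f_ok g_in V_split unfolding h_def by auto
  moreover have "h x \<noteq> h y" if "x \<in> V" "y \<in> V" and xy: "adj x y" for x y
  proof -
    have "x \<noteq> y"
      using irrefl xy by blast
    consider "x \<in> R" "y \<in> R" | "x \<in> set xs" "y \<in> R" | "x \<in> R" "y \<in> set xs"
      | "x \<in> set xs" "y \<in> set xs"
      using \<open>x \<in> V\<close> \<open>y \<in> V\<close> V_split by metis
    then show ?thesis
    proof cases
      case 1
      then have "\<bar>int (r x) - int (r y)\<bar> < int k"
        using r_dist[of x y] band[of x y] xy unfolding R_def by fastforce
      then show ?thesis
        using 1 g_window \<open>x \<noteq> y\<close> R_xs unfolding h_def by auto
    next
      case 2
      then show ?thesis using f_ok xy R_xs unfolding h_def by auto
    next
      case 3
      then show ?thesis using f_ok sym[OF xy] R_xs unfolding h_def by fastforce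
    next
      case 4
      then show ?thesis using f_inj \<open>x \<noteq> y\<close> unfolding h_def by (auto dest: inj_onD)
    qed
  qed
  moreover have "real (card {v \<in> V. h v = c}) \<le> of_int \<lceil>real (card V) / real k\<rceil>" for c
  proof -
    have "{v \<in> V. h v = c} \<subseteq> {v \<in> R. g v = c} \<union> {v \<in> set xs. f v = c}"
      using V_split R_xs unfolding h_def by auto
    then have "card {v \<in> V. h v = c} \<le> card ({v \<in> R. g v = c} \<union> {v \<in> set xs. f v = c})"
      using fin_R by (intro card_mono) auto
    also have "\<dots> \<le> card {v \<in> R. g v = c} + card {v \<in> set xs. f v = c}"
      by (rule card_Un_le)
    also have "card {v \<in> set xs. f v = c} \<le> 1"
      using f_inj by (auto simp: card_le_Suc0_iff_eq inj_on_def)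
    finally have "real (card {v \<in> V. h v = c}) \<le> real (card {v \<in> R. g v = c}) + 1"
      by simp
    also have "\<dots> \<le> of_int \<lceil>real (card R) / real k\<rceil> + 1"
    proof -
      have "int k \<le> \<bar>int (r x) - int (r y)\<bar>" if "x \<in> R" "y \<in> R" "x \<noteq> y" "g x = g y" for x y
        using g_window that by force
      then have "real (card {v \<in> R. g v = c}) \<le> of_int \<lceil>real (card R) / real k\<rceil>"
        using rank_less_card[OF fin_R] unfolding r_def by (intro colour_class_card_le[OF assms(2)])
      then show ?thesis by simp
    qed
    also have "\<dots> = of_int \<lceil>real (card V) / real k\<rceil>"
    proof -
      have "V = R \<union> set xs" "R \<inter> set xs = {}"
        using V_split R_xs by blast+
      then have "card V = card R + card (set xs)"
        using card_Un_disjoint[OF fin_R] by simp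
      then have "card V = card R + k"
        using distinct_card[OF assms(5)] assms(7) by simp
      then have "real (card V) / real k = real (card R) / real k + 1"
        using assms(2) by (simp add: add_divide_distrib)
      then show ?thesis by simp
    qed
    finally show ?thesis .
  qed
  ultimately show "\<exists>h. equitable_L_coloring V adj k L h"
    unfolding equitable_L_coloring_def by blast
qed

lemma theta_pos_0 [simp]: "theta_pos l i 0 = TU"
  by (simp add: theta_pos_def)

lemma theta_pos_length: "0 < l ! i \<Longrightarrow> theta_pos l i (l ! i) = TW"
  by (simp add: theta_pos_def)

lemma theta_pos_TV: "0 < j \<Longrightarrow> j < l ! i \<Longrightarrow> theta_pos l i j = TV i j"
  by (simp add: theta_pos_def)

lemma theta_pos_eq_TV: "theta_pos l i j = TV p q \<Longrightarrow> p = i \<and> q = j"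
  by (simp add: theta_pos_def split: if_splits)

lemma TV_in_theta_verts: "TV i j \<in> theta_verts l \<longleftrightarrow> i < length l \<and> 1 \<le> j \<and> j < l ! i"
  by (auto simp: theta_verts_def)

lemma TU_in_theta_verts [simp]: "TU \<in> theta_verts l"
  and TW_in_theta_verts [simp]: "TW \<in> theta_verts l"
  by (auto simp: theta_verts_def)

lemma finite_theta_verts: "finite (theta_verts l)"
proof -
  have "theta_verts l \<subseteq> {TU, TW} \<union> (\<lambda>(i, j). TV i j) ` ({..<length l} \<times> {..<sum_list l})"
  proof
    fix x assume x: "x \<in> theta_verts l"
    show "x \<in> {TU, TW} \<union> (\<lambda>(i, j). TV i j) ` ({..<length l} \<times> {..<sum_list l})"
    proof (cases x)
      case (TV i j)
      then have "i < length l" "j < l ! i"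
        using x by (auto simp: TV_in_theta_verts)
      then show ?thesis
        using TV elem_le_sum_list[of i l] by force
    qed auto
  qed
  then show ?thesis
    by (rule finite_subset) auto
qed

lemma theta_adj_sym: "theta_adj l x y \<Longrightarrow> theta_adj l y x"
  unfolding theta_adj_def by blast

lemma graph_square_sym:
  "(\<And>x y. adj x y \<Longrightarrow> adj y x) \<Longrightarrow> graph_square V adj x y \<Longrightarrow> graph_square V adj y x"
  unfolding graph_square_def by blast

lemma graph_square_irrefl: "\<not> graph_square V adj x x"
  unfolding graph_square_def by simp

lemma theta_square_sym:
  "graph_square (theta_verts l) (theta_adj l) x y \<Longrightarrow> graph_square (theta_verts l) (theta_adj l) y x"
  using graph_square_sym[of "theta_adj l"] theta_adj_sym by blast

definition theta_nbrs :: "nat list \<Rightarrow> theta_vertex \<Rightarrow> theta_vertex set" where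
  "theta_nbrs l x = (case x of
      TU \<Rightarrow> (\<lambda>i. theta_pos l i 1) ` {..<length l}
    | TW \<Rightarrow> (\<lambda>i. theta_pos l i (l ! i - 1)) ` {..<length l}
    | TV p q \<Rightarrow> {theta_pos l p (q - 1), theta_pos l p (q + 1)})"

lemma theta_adj_imp_nbrs:
  assumes "theta_adj l x y"
  shows "y \<in> theta_nbrs l x"
proof -
  obtain i j where ij: "i < length l" "j < l ! i"
    "x = theta_pos l i j \<and> y = theta_pos l i (Suc j) \<or> y = theta_pos l i j \<and> x = theta_pos l i (Suc j)"
    using assms unfolding theta_adj_def by blast
  then show ?thesis
    by (cases x) (auto simp: theta_nbrs_def theta_pos_def split: if_splits)
qed

lemma theta_square_cases:
  assumes "graph_square (theta_verts l) (theta_adj l) x y"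
  shows "x \<noteq> y" "y \<in> theta_nbrs l x \<or> (\<exists>z. z \<in> theta_nbrs l x \<and> y \<in> theta_nbrs l z)"
  using assms theta_adj_imp_nbrs unfolding graph_square_def by blast+

lemma theta_square_TV:
  assumes "graph_square (theta_verts l) (theta_adj l) (TV p q) y"
  shows "y \<in> theta_pos l p ` {q - 2, q - 1, q + 1, q + 2}
    \<or> q = 1 \<and> y \<in> theta_nbrs l TU \<or> q + 1 = l ! p \<and> y \<in> theta_nbrs l TW"
proof -
  have q: "1 \<le> q" "q < l ! p"
    using assms by (auto simp: graph_square_def TV_in_theta_verts)
  have nbrs_TV: "theta_nbrs l (TV p q) = {theta_pos l p (q - 1), theta_pos l p (q + 1)}"
    by (simp add: theta_nbrs_def)
  have below: "theta_nbrs l (theta_pos l p (q - 1)) \<subseteq> insert (TV p q) (theta_pos l p ` {q - 2})"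
    if "q \<noteq> 1"
    using q that by (auto simp: theta_pos_TV theta_nbrs_def numeral_2_eq_2)
  have above: "theta_nbrs l (theta_pos l p (q + 1)) \<subseteq> insert (TV p q) (theta_pos l p ` {q + 2})"
    if "q + 1 \<noteq> l ! p"
    using q that by (auto simp: theta_pos_TV theta_nbrs_def numeral_2_eq_2)
  show ?thesis
    using theta_square_cases[OF assms] nbrs_TV below above q
    by (cases "q = 1"; cases "q + 1 = l ! p") (auto simp: theta_pos_length)
qed

lemma theta_square_TU:
  assumes "\<forall>i<length l. 2 \<le> l ! i" "graph_square (theta_verts l) (theta_adj l) TU y"
  shows "\<exists>i<length l. y = TV i 1 \<or> y = theta_pos l i 2"
proof -
  have nbrs_TU: "theta_nbrs l TU = (\<lambda>i. TV i 1) ` {..<length l}"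
    using assms(1) by (force simp: theta_nbrs_def theta_pos_TV)
  have "theta_nbrs l (TV i 1) = {TU, theta_pos l i 2}" for i
    by (simp add: theta_nbrs_def numeral_2_eq_2)
  then show ?thesis
    using theta_square_cases[OF assms(2)] nbrs_TU by auto
qed

lemma theta_square_TW:
  assumes "\<forall>i<length l. 2 \<le> l ! i" "graph_square (theta_verts l) (theta_adj l) TW y"
  shows "\<exists>i<length l. y = TV i (l ! i - 1) \<or> y = theta_pos l i (l ! i - 2)"
proof -
  have nbrs_TW: "theta_nbrs l TW = (\<lambda>i. TV i (l ! i - 1)) ` {..<length l}"
    using assms(1) by (force simp: theta_nbrs_def theta_pos_TV)
  have "theta_nbrs l (TV i (l ! i - 1)) = {theta_pos l i (l ! i - 2), TW}" if "i < length l" for i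
    using assms(1) that by (auto simp: theta_nbrs_def theta_pos_length numeral_2_eq_2 Suc_diff_Suc)
  then show ?thesis
    using theta_square_cases[OF assms(2)] nbrs_TW by fastforce
qed

lemma mult_diff_eq_imp_eq:
  fixes h h' a a' w :: nat
  assumes "a < w" "a' < w" "int h * int w - int a = int h' * int w - int a'"
  shows "h = h' \<and> a = a'"
proof -
  have "(int h - int h') * int w = int a - int a'"
    using assms(3) by (simp add: left_diff_distrib)
  then have "\<bar>int h - int h'\<bar> * int w = \<bar>int a - int a'\<bar>"
    by (metis abs_mult abs_of_nat)
  moreover have "\<bar>int a - int a'\<bar> < int w"
    using assms(1,2) by (simp add: abs_less_iff)
  ultimately have close: "\<bar>int h - int h'\<bar> * int w < int w"
    by simp
  have "h = h'"
  proof (rule ccontr)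
    assume "h \<noteq> h'"
    then have "1 \<le> \<bar>int h - int h'\<bar>"
      by linarith
    then have "1 * int w \<le> \<bar>int h - int h'\<bar> * int w"
      by (rule mult_right_mono) simp
    with close show False
      by linarith
  qed
  moreover from this have "a = a'"
    using assms(3) by simp
  ultimately show ?thesis ..
qed

definition layout :: "nat \<Rightarrow> nat \<Rightarrow> nat \<Rightarrow> int" where
  "layout w i h = (if i < w then -1 else 1) * (int h * int w - int (i mod w))"

lemma abs_layout_diff: "\<bar>layout w i h - layout w i h'\<bar> = \<bar>int h - int h'\<bar> * int w"
proof -
  have "layout w i h - layout w i h' = (if i < w then -1 else 1) * ((int h - int h') * int w)"
    by (simp add: layout_def algebra_simps)
  then show ?thesis
    by (simp add: abs_mult)
qed

lemma layout_bounds: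
  assumes "0 < w" "1 \<le> h"
  shows "layout w i h < 0 \<longleftrightarrow> i < w" "layout w i h \<noteq> 0" "\<bar>layout w i h\<bar> \<le> int h * int w"
proof -
  define a where "a = i mod w"
  have layout_a: "layout w i h = (if i < w then -1 else 1) * (int h * int w - int a)"
    unfolding layout_def a_def ..
  have "a < w" "w \<le> h * w"
    using assms unfolding a_def by simp_all
  then have "a < h * w"
    by linarith
  then have "0 < int h * int w - int a" "int h * int w - int a \<le> int h * int w"
    by (simp_all flip: of_nat_mult)
  then show "layout w i h < 0 \<longleftrightarrow> i < w" "layout w i h \<noteq> 0" "\<bar>layout w i h\<bar> \<le> int h * int w"
    unfolding layout_a by simp_all
qed

lemma layout_inj:
  assumes "0 < w" "i < 2 * w" "i' < 2 * w" "1 \<le> h" "1 \<le> h'"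
    and eq: "layout w i h = layout w i' h'"
  shows "i = i' \<and> h = h'"
proof -
  have same_side: "i < w \<longleftrightarrow> i' < w"
    using eq layout_bounds(1)[OF assms(1,4), of i] layout_bounds(1)[OF assms(1,5), of i'] by simp
  then have "int h * int w - int (i mod w) = int h' * int w - int (i' mod w)"
    using eq unfolding layout_def by (cases "i < w") simp_all
  then have h: "h = h'" and mod: "i mod w = i' mod w"
    using mult_diff_eq_imp_eq[OF mod_less_divisor[OF assms(1)] mod_less_divisor[OF assms(1)]]
    by blast+
  have side: "j div w = (if j < w then 0 else 1)" if "j < 2 * w" for j
  proof (cases "j < w")
    case False
    then have "j div w = 1"
      using that by (intro div_nat_eqI) simp_all
    with False show ?thesis by simp
  qed simp
  have "i div w = i' div w"
    using side[OF assms(2)] side[OF assms(3)] same_side by argo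
  then have "i = i'"
    using mod by (metis div_mult_mod_eq)
  with h show ?thesis by simp
qed

definition theta_layout :: "nat list \<Rightarrow> theta_vertex \<Rightarrow> int" where
  "theta_layout l x = (case x of TV i j \<Rightarrow> layout ((length l + 1) div 2) i (l ! i - j) | _ \<Rightarrow> 0)"

lemma theta_layout_simps [simp]:
  "theta_layout l TU = 0" "theta_layout l TW = 0"
  "theta_layout l (TV i j) = layout ((length l + 1) div 2) i (l ! i - j)"
  by (simp_all add: theta_layout_def)

lemma inj_on_theta_layout: "inj_on (theta_layout l) (theta_verts l - {TU})"
proof (rule inj_onI)
  let ?w = "(length l + 1) div 2"
  have TV_facts: "i < 2 * ?w" "1 \<le> l ! i - j" "0 < ?w" if "TV i j \<in> theta_verts l" for i j
    using that by (auto simp: TV_in_theta_verts)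
  fix x y
  assume x: "x \<in> theta_verts l - {TU}" and y: "y \<in> theta_verts l - {TU}"
    and eq: "theta_layout l x = theta_layout l y"
  show "x = y"
  proof (cases x)
    case (TV i j)
    note x_TV = this
    show ?thesis
    proof (cases y)
      case (TV i' j')
      have xV: "TV i j \<in> theta_verts l" and yV: "TV i' j' \<in> theta_verts l"
        using x y x_TV TV by auto
      have "layout ?w i (l ! i - j) = layout ?w i' (l ! i' - j')"
        using eq x_TV TV by simp
      then have "i = i' \<and> l ! i - j = l ! i' - j'"
        by (rule layout_inj[OF TV_facts(3)[OF xV] TV_facts(1)[OF xV] TV_facts(1)[OF yV]
              TV_facts(2)[OF xV] TV_facts(2)[OF yV]])
      then show ?thesis
        using x y x_TV TV by (auto simp: TV_in_theta_verts)
    qed (use x y eq x_TV layout_bounds(2) TV_facts in auto)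
  next
    case TW
    then show ?thesis
      using x y eq layout_bounds(2) TV_facts by (cases y) auto
  qed (use x in simp)
qed

lemma theta_layout_near_TW:
  assumes two: "\<forall>i<length l. 2 \<le> l ! i"
    and G: "graph_square (theta_verts l) (theta_adj l) TW y" and "y \<noteq> TU"
  shows "\<bar>theta_layout l y\<bar> \<le> 2 * int ((length l + 1) div 2)"
proof -
  let ?w = "(length l + 1) div 2"
  obtain i where i: "i < length l" and y: "y = TV i (l ! i - 1) \<or> y = theta_pos l i (l ! i - 2)"
    using theta_square_TW[OF two G] by blast
  have li: "2 \<le> l ! i"
    using two i by blast
  have "0 < ?w"
    using i by simp
  have bound: "\<bar>layout ?w i h\<bar> \<le> 2 * int ?w" if "1 \<le> h" "h \<le> 2" for h
  proof -
    have "int h * int ?w \<le> 2 * int ?w"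
      using that by (intro mult_right_mono) simp_all
    then show ?thesis
      using layout_bounds(3)[OF \<open>0 < ?w\<close> that(1), of i] by linarith
  qed
  from y show ?thesis
  proof
    assume "y = TV i (l ! i - 1)"
    moreover have "l ! i - (l ! i - 1) = 1"
      using li by simp
    ultimately show ?thesis
      using bound[of 1] by simp
  next
    assume y2: "y = theta_pos l i (l ! i - 2)"
    then have "l ! i \<noteq> 2"
      using \<open>y \<noteq> TU\<close> by auto
    then have "y = TV i (l ! i - 2)" "l ! i - (l ! i - 2) = 2"
      using y2 li by (simp_all add: theta_pos_TV)
    then show ?thesis
      using bound[of 2] by simp
  qed
qed

lemma theta_layout_band:
  assumes two: "\<forall>i<length l. 2 \<le> l ! i"
    and G: "graph_square (theta_verts l) (theta_adj l) x y"
    and far: "x \<notin> insert TU (range (\<lambda>i. TV i 1))" "y \<notin> insert TU (range (\<lambda>i. TV i 1))"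
  shows "\<bar>theta_layout l x - theta_layout l y\<bar> \<le> int (length l) + 1"
proof -
  let ?w = "(length l + 1) div 2"
  have "2 * ?w \<le> length l + 1"
    by simp
  moreover have "\<bar>theta_layout l x - theta_layout l y\<bar> \<le> 2 * int ?w"
  proof (cases x)
    case TW
    then show ?thesis
      using theta_layout_near_TW[OF two] G far(2) by auto
  next
    case x_TV: (TV p q)
    show ?thesis
    proof (cases y)
      case TW
      then have "graph_square (theta_verts l) (theta_adj l) TW x"
        using theta_square_sym[OF G] by simp
      then have "\<bar>theta_layout l x\<bar> \<le> 2 * int ?w"
        using theta_layout_near_TW[OF two] far(1) by blast
      then show ?thesis
        using TW by simp
    next
      case y_TV: (TV p' q')
      have "0 < ?w" "2 \<le> q" "q < l ! p" "q' < l ! p'"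
        using G far unfolding x_TV y_TV by (auto simp: graph_square_def TV_in_theta_verts)
      have h1: "\<bar>layout ?w i 1\<bar> \<le> int ?w" for i
        using layout_bounds(3)[OF \<open>0 < ?w\<close>, of 1 i] by simp
      consider (path) j where "j \<in> {q - 2, q - 1, q + 1, q + 2}" "TV p' q' = theta_pos l p j"
        | (hub) "q + 1 = l ! p" "TV p' q' \<in> theta_nbrs l TW"
        using theta_square_TV[OF G[unfolded x_TV y_TV]] \<open>2 \<le> q\<close> by auto
      then show ?thesis
      proof cases
        case path
        then have "p' = p" "\<bar>int q - int q'\<bar> \<le> 2"
          using theta_pos_eq_TV[OF path(2)[symmetric]] by auto
        then have "\<bar>int (l ! p - q) - int (l ! p - q')\<bar> * int ?w \<le> 2 * int ?w"
          using \<open>q < l ! p\<close> \<open>q' < l ! p'\<close> by (intro mult_right_mono) simp_all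
        then show ?thesis
          using abs_layout_diff \<open>p' = p\<close> unfolding x_TV y_TV by simp
      next
        case hub
        then obtain i where "theta_pos l i (l ! i - 1) = TV p' q'"
          by (auto simp: theta_nbrs_def)
        then have "p' = i" "q' = l ! i - 1"
          using theta_pos_eq_TV by blast+
        then have "l ! p' - q' = 1"
          using \<open>q' < l ! p'\<close> by simp
        moreover have "l ! p - q = 1"
          using hub(1) by simp
        ultimately show ?thesis
          using h1[of p] h1[of p'] unfolding x_TV y_TV by (simp add: abs_le_iff)
      qed
    qed (use far in auto)
  qed (use far in auto)
  ultimately show ?thesis
    by linarith
qed

lemma card_nbrs_outside_le:
  assumes "\<And>y. adj x y \<Longrightarrow> y \<notin> S \<Longrightarrow> y \<in> T" "finite T"
  shows "card {y \<in> V - S. adj x y} \<le> card T"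
  using assms by (intro card_mono) auto

locale theta_hyps =
  fixes l :: "nat list" and k :: nat
  assumes length_ge: "3 \<le> length l" and sorted: "sorted l"
    and first_ge: "2 \<le> l ! 0" and second_ge: "4 \<le> l ! 1"
    and k_ge: "length l + 3 \<le> k" and k_le: "k \<le> 2 * length l + 1"
begin

abbreviation "m \<equiv> length l"
abbreviation "G \<equiv> graph_square (theta_verts l) (theta_adj l)"

lemma path_length_ge_4: "1 \<le> i \<Longrightarrow> i < m \<Longrightarrow> 4 \<le> l ! i"
  using sorted second_ge by (meson le_trans sorted_nth_mono)

lemma path_length_ge_2: "i < m \<Longrightarrow> 2 \<le> l ! i"
  using first_ge path_length_ge_4[of i] by (cases "i = 0") auto

lemma last_path_ge_4: "4 \<le> l ! (m - 1)"
  using length_ge by (intro path_length_ge_4) auto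

definition special_vertex :: "nat \<Rightarrow> theta_vertex" where
  "special_vertex j = (if j = 0 then TV (m - 1) 3 else if j = 1 then TV 0 1 else if j = 2 then TU
     else if j \<le> m then TV (j - 2) 1 else if j < k - 2 then TV (j - m) 2
     else if j = k - 2 then TV (m - 1) 2 else TV (m - 1) 1)"

definition special :: "theta_vertex list" where
  "special = map special_vertex [0..<k]"

lemma length_special: "length special = k"
  by (simp add: special_def)

lemma special_nth: "j < k \<Longrightarrow> special ! j = special_vertex j"
  by (simp add: special_def)

lemma distinct_special: "distinct special"
  unfolding special_def distinct_map using length_ge k_ge k_le
  by (auto simp: inj_on_def special_vertex_def split: if_splits)

lemma special_memb:
  "TU \<in> set special" "TV (m - 1) 2 \<in> set special" "TV (m - 1) 3 \<in> set special"
  "i < m \<Longrightarrow> TV i 1 \<in> set special" "1 \<le> i \<Longrightarrow> i < k - m - 2 \<Longrightarrow> TV i 2 \<in> set special"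
proof -
  have in_special: "special_vertex j \<in> set special" if "j < k" for j
    using that by (simp add: special_def)
  have "special_vertex 2 = TU" "special_vertex (k - 2) = TV (m - 1) 2" "special_vertex 0 = TV (m - 1) 3"
    using k_ge length_ge by (simp_all add: special_vertex_def)
  then show "TU \<in> set special" "TV (m - 1) 2 \<in> set special" "TV (m - 1) 3 \<in> set special"
    using in_special[of 2] in_special[of "k - 2"] in_special[of 0] k_ge by simp_all
  show "TV i 1 \<in> set special" if i: "i < m"
  proof -
    consider "i = 0" | "1 \<le> i" "i < m - 1" | "i = m - 1"
      using i by linarith
    then show ?thesis
    proof cases
      case 1
      then have "special_vertex 1 = TV i 1"
        by (simp add: special_vertex_def)
      then show ?thesis
        using in_special[of 1] k_ge by simp
    next
      case 2
      then have "special_vertex (i + 2) = TV i 1"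
        by (simp add: special_vertex_def)
      then show ?thesis
        using in_special[of "i + 2"] 2 k_ge by simp
    next
      case 3
      then have "special_vertex (k - 1) = TV i 1"
        using k_ge length_ge by (simp add: special_vertex_def)
      then show ?thesis
        using in_special[of "k - 1"] k_ge by simp
    qed
  qed
  show "TV i 2 \<in> set special" if "1 \<le> i" "i < k - m - 2"
  proof -
    have "special_vertex (i + m) = TV i 2"
      using that length_ge by (simp add: special_vertex_def)
    then show ?thesis
      using in_special[of "i + m"] that by simp
  qed
qed

lemma special_subset: "set special \<subseteq> theta_verts l"
proof -
  have "special_vertex j \<in> theta_verts l" if "j < k" for j
  proof -
    have "4 \<le> l ! (m - 1)" "2 \<le> l ! 0" "m - 1 < m"
      using last_path_ge_4 first_ge length_ge by simp_all
    moreover have "2 \<le> l ! (j - 2)" if "3 \<le> j" "j \<le> m"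
      using that path_length_ge_2[of "j - 2"] by simp
    moreover have "j - m < m" "4 \<le> l ! (j - m)" if "m < j" "j < k - 2"
      using that k_le path_length_ge_4[of "j - m"] by simp_all
    ultimately show ?thesis
      using length_ge k_ge by (auto simp: special_vertex_def TV_in_theta_verts)
  qed
  then show ?thesis
    by (auto simp: special_def)
qed

abbreviation outer_degree :: "theta_vertex \<Rightarrow> nat" where
  "outer_degree x \<equiv> card {y \<in> theta_verts l - set special. G x y}"

lemma finite_theta_nbrs [simp]: "finite (theta_nbrs l x)"
  by (cases x) (simp_all add: theta_nbrs_def)

lemma card_theta_nbrs_TW: "card (theta_nbrs l TW) \<le> m"
  using card_image_le[of "{..<m}" "\<lambda>i. theta_pos l i (l ! i - 1)"] by (simp add: theta_nbrs_def)

lemma card_image_pair_le: "card (f ` {a, b}) \<le> 2"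
  using card_image_le[of "{a, b}" f] card_insert_le_m1[of 2 "{b}" a] by (simp add: card_insert_if)

lemma TU_nbrs_special: "theta_nbrs l TU \<subseteq> set special"
proof
  fix y assume "y \<in> theta_nbrs l TU"
  then obtain i where "i < m" "y = theta_pos l i 1"
    by (auto simp: theta_nbrs_def)
  then show "y \<in> set special"
    using path_length_ge_2[of i] special_memb by (simp add: theta_pos_TV)
qed

lemma outer_degree_TV_last_3: "outer_degree (TV (m - 1) 3) \<le> m + 2"
proof -
  let ?T = "theta_pos l (m - 1) ` {4, 5} \<union> theta_nbrs l TW"
  have "outer_degree (TV (m - 1) 3) \<le> card ?T"
  proof (rule card_nbrs_outside_le)
    fix y assume "G (TV (m - 1) 3) y" "y \<notin> set special"
    then show "y \<in> ?T"
      using theta_square_TV[of l "m - 1" 3 y] special_memb length_ge last_path_ge_4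
      by (auto simp: theta_pos_TV)
  qed simp
  also have "\<dots> \<le> m + 2"
    using card_Un_le[of "theta_pos l (m - 1) ` {4, 5}" "theta_nbrs l TW"]
      card_image_pair_le[of "theta_pos l (m - 1)" 4 5] card_theta_nbrs_TW by linarith
  finally show ?thesis .
qed

lemma outer_degree_TV_0_1: "outer_degree (TV 0 1) \<le> m + 1"
proof -
  let ?T = "theta_pos l 0 ` {2, 3} \<union> (\<lambda>i. theta_pos l i (l ! i - 1)) ` {1..<m}"
  have idx: "{1 - 2, 1 - 1, 1 + 1, 1 + 2} = {0, 2, 3 :: nat}"
    by auto
  have "outer_degree (TV 0 1) \<le> card ?T"
  proof (rule card_nbrs_outside_le)
    fix y assume G: "G (TV 0 1) y" and y: "y \<notin> set special"
    consider "y \<in> theta_pos l 0 ` {0, 2, 3}" | "y \<in> theta_nbrs l TU"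
      | "1 + 1 = l ! 0" "y \<in> theta_nbrs l TW"
      using theta_square_TV[OF G, unfolded idx] by blast
    then show "y \<in> ?T"
    proof cases
      case 1
      then show ?thesis
        using y special_memb(1) by auto
    next
      case 2
      then show ?thesis
        using y TU_nbrs_special by auto
    next
      case 3
      then obtain i where i: "i < m" "y = theta_pos l i (l ! i - 1)"
        by (auto simp: theta_nbrs_def)
      have "i \<noteq> 0"
      proof
        assume "i = 0"
        then have "y = TV 0 1"
          using i 3(1) by (simp add: theta_pos_TV)
        moreover have "0 < m"
          using length_ge by linarith
        ultimately show False
          using y special_memb(4) by blast
      qed
      then show ?thesis
        using i by auto
    qed
  qed simp
  also have "\<dots> \<le> 2 + (m - 1)"
    using card_Un_le[of "theta_pos l 0 ` {2, 3}" "(\<lambda>i. theta_pos l i (l ! i - 1)) ` {1..<m}"]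
      card_image_pair_le[of "theta_pos l 0" 2 3] card_image_le[of "{1..<m}" "\<lambda>i. theta_pos l i (l ! i - 1)"]
    by simp
  finally show ?thesis
    using length_ge by simp
qed

lemma outer_degree_TU: "outer_degree TU \<le> 2 * m + 2 - k"
proof -
  let ?I = "{0} \<union> {k - m - 2..<m - 1}"
  have "outer_degree TU \<le> card ((\<lambda>i. theta_pos l i 2) ` ?I)"
  proof (rule card_nbrs_outside_le)
    fix y assume G: "G TU y" and y: "y \<notin> set special"
    obtain i where i: "i < m" "y = TV i 1 \<or> y = theta_pos l i 2"
      using theta_square_TU[OF _ G] path_length_ge_2 by blast
    have "i \<in> ?I"
    proof (rule ccontr)
      assume "i \<notin> ?I"
      then have "1 \<le> i \<and> i < k - m - 2 \<or> i = m - 1"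
        using i(1) by auto
      then have "theta_pos l i 2 \<in> set special"
        using path_length_ge_4[of i] i(1) last_path_ge_4 special_memb by (auto simp: theta_pos_TV)
      then show False
        using i special_memb y by auto
    qed
    then show "y \<in> (\<lambda>i. theta_pos l i 2) ` ?I"
      using i special_memb y by auto
  qed simp
  also have "\<dots> \<le> card ?I"
    by (rule card_image_le) simp
  also have "\<dots> \<le> 2 * m + 2 - k"
    using card_Un_le[of "{0}" "{k - m - 2..<m - 1}"] k_ge k_le by simp
  finally show ?thesis .
qed

lemma outer_degree_TV_1:
  assumes "1 \<le> i" "i < m - 1"
  shows "outer_degree (TV i 1) \<le> 2"
proof -
  have "outer_degree (TV i 1) \<le> card (theta_pos l i ` {2, 3})"
  proof (rule card_nbrs_outside_le)
    fix y assume "G (TV i 1) y" "y \<notin> set special"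
    moreover have "1 < l ! j" if "j < m" for j
      using path_length_ge_2[OF that] by simp
    ultimately show "y \<in> theta_pos l i ` {2, 3}"
      using theta_square_TV[of l i 1 y] special_memb path_length_ge_4[of i] assms
      by (fastforce simp: theta_pos_TV theta_nbrs_def)
  qed simp
  then show ?thesis
    using card_image_pair_le[of "theta_pos l i" 2 3] by simp
qed

lemma outer_degree_TV_2:
  assumes "1 \<le> i" "i < k - m - 2"
  shows "outer_degree (TV i 2) \<le> 2"
proof -
  have i: "i < m" "4 \<le> l ! i"
    using assms k_le path_length_ge_4[of i] by simp_all
  have "outer_degree (TV i 2) \<le> card (theta_pos l i ` {3, 4})"
  proof (rule card_nbrs_outside_le)
    fix y assume "G (TV i 2) y" "y \<notin> set special"
    then show "y \<in> theta_pos l i ` {3, 4}"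
      using theta_square_TV[of l i 2 y] special_memb i by (auto simp: theta_pos_TV)
  qed simp
  then show ?thesis
    using card_image_pair_le[of "theta_pos l i" 3 4] by simp
qed

lemma outer_degree_TV_last_2: "outer_degree (TV (m - 1) 2) \<le> 1"
proof -
  have "outer_degree (TV (m - 1) 2) \<le> card {theta_pos l (m - 1) 4}"
  proof (rule card_nbrs_outside_le)
    fix y assume "G (TV (m - 1) 2) y" "y \<notin> set special"
    then show "y \<in> {theta_pos l (m - 1) 4}"
      using theta_square_TV[of l "m - 1" 2 y] special_memb length_ge last_path_ge_4
      by (auto simp: theta_pos_TV)
  qed simp
  then show ?thesis by simp
qed

lemma outer_degree_TV_last_1: "outer_degree (TV (m - 1) 1) = 0"
proof -
  have idx: "{1 - 2, 1 - 1, 1 + 1, 1 + 2} = {0, 2, 3 :: nat}"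
    by auto
  have "theta_pos l (m - 1) ` {0, 2, 3} \<subseteq> set special" "1 + 1 \<noteq> l ! (m - 1)"
    using special_memb last_path_ge_4 by (auto simp: theta_pos_TV)
  then have "y \<in> set special" if "G (TV (m - 1) 1) y" for y
    using theta_square_TV[OF that, unfolded idx] TU_nbrs_special by blast
  then have "outer_degree (TV (m - 1) 1) \<le> card ({} :: theta_vertex set)"
    by (intro card_nbrs_outside_le) auto
  then show ?thesis by simp
qed

lemma special_degree:
  assumes "j < k"
  shows "outer_degree (special ! j) + j < k"
proof -
  consider "j = 0" | "j = 1" | "j = 2" | "3 \<le> j" "j \<le> m" | "m < j" "j < k - 2" | "j = k - 2" | "j = k - 1"
    using assms by linarith
  then show ?thesis
  proof cases
    case 1
    then show ?thesis
      using outer_degree_TV_last_3 k_ge by (simp add: special_nth special_vertex_def)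
  next
    case 2
    then show ?thesis
      using outer_degree_TV_0_1 k_ge by (simp add: special_nth special_vertex_def)
  next
    case 3
    then show ?thesis
      using outer_degree_TU k_ge k_le by (simp add: special_nth special_vertex_def)
  next
    case 4
    then have "special ! j = TV (j - 2) 1"
      using assms by (simp add: special_nth special_vertex_def)
    moreover have "1 \<le> j - 2" "j - 2 < m - 1"
      using 4 by linarith+
    ultimately show ?thesis
      using outer_degree_TV_1[of "j - 2"] 4 k_ge by simp
  next
    case 5
    then have "special ! j = TV (j - m) 2"
      using assms length_ge by (simp add: special_nth special_vertex_def)
    moreover have "1 \<le> j - m" "j - m < k - m - 2"
      using 5 by linarith+
    ultimately show ?thesis
      using outer_degree_TV_2[of "j - m"] 5 by simp
  next
    case 6
    then have "special ! j = TV (m - 1) 2"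
      using k_ge length_ge by (simp add: special_nth special_vertex_def)
    then show ?thesis
      using outer_degree_TV_last_2 6 k_ge by simp
  next
    case 7
    then have "special ! j = TV (m - 1) 1"
      using k_ge length_ge by (simp add: special_nth special_vertex_def)
    then show ?thesis
      using outer_degree_TV_last_1 7 k_ge by simp
  qed
qed

theorem equitably_choosable_theta_square: "equitably_choosable (theta_verts l) G k"
proof (rule equitably_choosable_by_layout)
  show "finite (theta_verts l)" "0 < k" "distinct special" "set special \<subseteq> theta_verts l"
    "length special = k"
    using finite_theta_verts k_ge distinct_special special_subset length_special by simp_all
  show "G y x" if "G x y" for x y
    using theta_square_sym[OF that] .
  show "\<not> G x x" for x
    by (rule graph_square_irrefl)
  show "outer_degree (special ! j) + j < k" if "j < k" for j
    using special_degree[OF that] .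
  show "inj_on (theta_layout l) (theta_verts l - set special)"
    by (rule inj_on_subset[OF inj_on_theta_layout]) (use special_memb(1) in auto)
  show "\<bar>theta_layout l x - theta_layout l y\<bar> < int k"
    if "x \<in> theta_verts l - set special" "y \<in> theta_verts l - set special" "G x y" for x y
  proof -
    have "z \<notin> insert TU (range (\<lambda>i. TV i 1))" if "z \<in> theta_verts l - set special" for z
      using that special_memb(1,4) by (auto simp: TV_in_theta_verts)
    then have "\<bar>theta_layout l x - theta_layout l y\<bar> \<le> int m + 1"
      using theta_layout_band[OF _ \<open>G x y\<close>] that(1,2) path_length_ge_2 by blast
    then show ?thesis
      using k_ge by linarith
  qed
qed

end

theorem lemma3p4:
  fixes l :: "nat list" and k :: nat
  assumes "length l \<ge> 3"
    and "sorted l"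
    and "l ! 0 \<ge> 2"
    and "l ! 1 \<ge> 4"
    and "length l + 3 \<le> k" and "k \<le> 2 * length l + 1"
  shows "equitably_choosable (theta_verts l) (graph_square (theta_verts l) (theta_adj l)) k"
proof -
  interpret theta_hyps l k
    using assms by unfold_locales
  show ?thesis
    by (rule equitably_choosable_theta_square)
qed

end
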